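(* (a) The map $S\mapsto C(S)$ is a bijection from the set of subsets of $[n]=\{1,\dots,n\}$ to the set of chambers of $I(\mathfrak{gl}_n,V\oplus\bigwedge^2)$; in particular this arrangement has $2^n$ chambers. (b) For $S\subseteq[n]$ and $1\le\ell\le n$ let $\pi_\ell^S=|S\cap[n-\ell+1,\infty)|$ and \[ e_\ell^S=(\underbrace{1,\dots,1}_{\pi_\ell^S},\underbrace{0,\dots,0}_{n-\ell},\underbrace{-1,\dots,-1}_{\ell-\pi_\ell^S})\in\mathbb{R}^n. \] Then the extreme rays of $C(S)$ are the rays generated by $e_1^S,\dots,e_n^S$, and $e_1^S,\dots,e_n^S$ non-negatively span $C(S)$. In particular every chamber is a simplicial cone (the arrangement is simplicial).
   Context: Identify the diagonal Cartan subalgebra of $\mathfrak{gl}_n$ with $\mathbb{R}^n$ with coordinates $x_1,\dots,x_n$. Let $W=\{x_1\ge\cdots\ge x_n\}$ and $W^0=\{x_1>\cdots>x_n\}$. For $1\le i\le j\le n$ let $\lambda_{i,j}^\perp$ be the hyperplane $x_i+x_j=0$ (for $i=j$: $x_i=0$); $I(\mathfrak{gl}_n,V\oplus\bigwedge^2)$ is the arrangement of these hyperplanes restricted to $W$. Chambers are the closures of the connected components of $W^0\setminus\bigcup\lambda_{i,j}^\perp$; a face is a chamber or the intersection of a chamber with a supporting hyperplane; an extreme ray is a face that is a half-line. For $S=\{a_1>a_2>\cdots>a_k\}\subseteq[n]$, $C(S)$ is the subset of $W$ on which, for all $1\le i\le j\le n$: $x_i+x_j\ge0$ if $i\le k$ and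 $j\le i+a_i-1$, and $x_i+x_j\le0$ otherwise (equivalently, in the right-justified tableau of signs of $x_i+x_j$, row $i$ has exactly $a_i$ plus signs for $i\le k$ and none for $i>k$). *)

theory Defs
  imports "HOL-Analysis.Analysis"
begin

text \<open>Points of R^n are modelled as functions nat => real that vanish outside the
index set {1..n}; coordinate i is x i. The type nat => real carries the product
topology (HOL-Analysis Function_Topology); on this closed subspace it is the usual
Euclidean topology of R^n.\<close>

definition Rn :: "nat \<Rightarrow> (nat \<Rightarrow> real) set" where
  "Rn n = {x. \<forall>i. i \<notin> {1..n} \<longrightarrow> x i = 0}"

definition Wc :: "nat \<Rightarrow> (nat \<Rightarrow> real) set" where
  "Wc n = {x \<in> Rn n. \<forall>i. 1 \<le> i \<and> i < n \<longrightarrow> x i \<ge> x (Suc i)}"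

definition W0 :: "nat \<Rightarrow> (nat \<Rightarrow> real) set" where
  "W0 n = {x \<in> Rn n. \<forall>i. 1 \<le> i \<and> i < n \<longrightarrow> x i > x (Suc i)}"

definition hyp :: "nat \<Rightarrow> nat \<Rightarrow> nat \<Rightarrow> (nat \<Rightarrow> real) set" where
  "hyp n i j = {x \<in> Rn n. (if i = j then x i = 0 else x i + x j = 0)}"

definition arr_union :: "nat \<Rightarrow> (nat \<Rightarrow> real) set" where
  "arr_union n = (\<Union>i\<in>{1..n}. \<Union>j\<in>{i..n}. hyp n i j)"

definition chambers :: "nat \<Rightarrow> (nat \<Rightarrow> real) set set" where
  "chambers n = closure ` components (W0 n - arr_union n)"

definition kth_largest :: "nat set \<Rightarrow> nat \<Rightarrow> nat" where
  "kth_largest S i = rev (sorted_list_of_set S) ! (i - 1)"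

definition Cset :: "nat \<Rightarrow> nat set \<Rightarrow> (nat \<Rightarrow> real) set" where
  "Cset n S = {x \<in> Wc n. \<forall>i j. 1 \<le> i \<and> i \<le> j \<and> j \<le> n \<longrightarrow>
      (if i \<le> card S \<and> j \<le> i + kth_largest S i - 1 then x i + x j \<ge> 0
       else x i + x j \<le> 0)}"

definition lin_form :: "nat \<Rightarrow> (nat \<Rightarrow> real) \<Rightarrow> (nat \<Rightarrow> real) \<Rightarrow> real" where
  "lin_form n a x = (\<Sum>i=1..n. a i * x i)"

definition supporting_hyperplane ::
  "nat \<Rightarrow> (nat \<Rightarrow> real) set \<Rightarrow> (nat \<Rightarrow> real) set \<Rightarrow> bool" where
  "supporting_hyperplane n C H \<longleftrightarrow>
     (\<exists>a b. a \<in> Rn n \<and> a \<noteq> (\<lambda>i. 0) \<and> H = {x \<in> Rn n. lin_form n a x = b} \<and>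
        (\<forall>x\<in>C. lin_form n a x \<le> b) \<and> C \<inter> H \<noteq> {})"

definition is_face :: "nat \<Rightarrow> (nat \<Rightarrow> real) set \<Rightarrow> (nat \<Rightarrow> real) set \<Rightarrow> bool" where
  "is_face n C F \<longleftrightarrow> F = C \<or> (\<exists>H. supporting_hyperplane n C H \<and> F = C \<inter> H)"

definition ray_from :: "(nat \<Rightarrow> real) \<Rightarrow> (nat \<Rightarrow> real) \<Rightarrow> (nat \<Rightarrow> real) set" where
  "ray_from p v = {(\<lambda>i. p i + t * v i) | t. t \<ge> 0}"

definition is_halfline :: "nat \<Rightarrow> (nat \<Rightarrow> real) set \<Rightarrow> bool" where
  "is_halfline n F \<longleftrightarrow> (\<exists>p v. p \<in> Rn n \<and> v \<in> Rn n \<and> v \<noteq> (\<lambda>i. 0) \<and> F = ray_from p v)"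

definition extreme_rays :: "nat \<Rightarrow> (nat \<Rightarrow> real) set \<Rightarrow> (nat \<Rightarrow> real) set set" where
  "extreme_rays n C = {F. is_face n C F \<and> is_halfline n F}"

definition pi_S :: "nat \<Rightarrow> nat set \<Rightarrow> nat \<Rightarrow> nat" where
  "pi_S n S l = card (S \<inter> {n - l + 1..})"

definition e_vec :: "nat \<Rightarrow> nat set \<Rightarrow> nat \<Rightarrow> (nat \<Rightarrow> real)" where
  "e_vec n S l = (\<lambda>i. if i < 1 \<or> i > n then 0
                      else if i \<le> pi_S n S l then 1
                      else if i \<le> pi_S n S l + (n - l) then 0
                      else -1)"

definition nonneg_span :: "nat \<Rightarrow> (nat \<Rightarrow> nat \<Rightarrow> real) \<Rightarrow> (nat \<Rightarrow> real) set" where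
  "nonneg_span n e = {(\<lambda>i. \<Sum>l=1..n. c l * e l i) | c. \<forall>l\<in>{1..n}. c l \<ge> 0}"

definition lin_indep_fam :: "nat \<Rightarrow> (nat \<Rightarrow> nat \<Rightarrow> real) \<Rightarrow> bool" where
  "lin_indep_fam n e \<longleftrightarrow>
     (\<forall>c. (\<lambda>i. \<Sum>l=1..n. c l * e l i) = (\<lambda>i. 0) \<longrightarrow> (\<forall>l\<in>{1..n}. c l = 0))"

end

theory Submission
  imports Defs
begin

text \<open>For fixed \<open>S\<close>, the vector \<open>e_m\<close> differs from \<open>e_(m-1)\<close> (with \<open>e_0 = 0\<close>) in a single coordinate, so
  \<open>e_1, \<dots>, e_n\<close> is a basis whose dual basis consists of differences of two signed coordinates.
  Each dual form is non-negative on \<open>C(S)\<close> (it is an inequality of \<open>W\<close> or a sign condition at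
  the edge of the plus signs of the tableau) and each \<open>e_l\<close> lies in \<open>C(S)\<close>; hence \<open>C(S)\<close> is
  the simplicial cone spanned by the \<open>e_l\<close>, and its faces and extreme rays are those of a
  simplicial cone.

  The open cone where all dual forms are positive is convex, has closure \<open>C(S)\<close>, and is exactly
  the part of \<open>C(S)\<close> off the arrangement. These open cones partition the complement of the
  arrangement: a point \<open>x\<close> off the arrangement lies in \<open>C(S)\<close> precisely for \<open>S\<close> the set of ranks
  of \<open>|x_i|\<close> among \<open>|x_1|, \<dots>, |x_n|\<close>, \<open>x_i > 0\<close>. So they are the connected components, and the
  chambers are the \<open>C(S)\<close>.\<close>

lemma kth_largest_less:
  assumes "finite S" "1 \<le> i" "i < j" "j \<le> card S"
  shows "kth_largest S j < kth_largest S i"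
proof -
  have "sorted_wrt (>) (rev (sorted_list_of_set S))"
    by (simp add: sorted_wrt_rev)
  then have "rev (sorted_list_of_set S) ! (i - 1) > rev (sorted_list_of_set S) ! (j - 1)"
    using assms by (simp add: sorted_wrt_iff_nth_less)
  then show ?thesis
    by (simp add: kth_largest_def)
qed

lemma kth_largest_image:
  assumes "finite S"
  shows "kth_largest S ` {1..card S} = S"
proof -
  define L where "L = rev (sorted_list_of_set S)"
  have shift: "{1..card S} = Suc ` {0..<card S}"
    by (simp add: image_Suc_atLeastLessThan atLeastLessThanSuc_atLeastAtMost)
  have "kth_largest S ` {1..card S} = nth L ` {0..<length L}"
    unfolding shift image_image by (simp add: kth_largest_def L_def)
  also have "\<dots> = S"
    using assms by (simp add: nth_image L_def)
  finally show ?thesis .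
qed

lemma kth_largest_eqI:
  assumes dec: "\<And>i j. 1 \<le> i \<Longrightarrow> i < j \<Longrightarrow> j \<le> k \<Longrightarrow> f j < f i"
    and img: "f ` {1..k} = S"
  shows "card S = k" and "\<And>i. i \<in> {1..k} \<Longrightarrow> kth_largest S i = f i"
proof -
  have "inj_on f {1..k}"
    by (rule inj_onI) (metis atLeastAtMost_iff dec less_irrefl nat_neq_iff)
  then show card: "card S = k"
    using card_image img by fastforce
  define L where "L = map (\<lambda>j. f (k - j)) [0..<k]"
  have "sorted_wrt (<) L"
    unfolding L_def sorted_wrt_iff_nth_less by (auto intro!: dec)
  moreover have "(\<lambda>j. f (k - j)) ` {0..<k} = f ` {1..k}"
  proof (intro set_eqI iffI)
    fix y assume "y \<in> (\<lambda>j. f (k - j)) ` {0..<k}"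
    then obtain j where "j < k" "y = f (k - j)" by auto
    then show "y \<in> f ` {1..k}" by (intro image_eqI[of _ _ "k - j"]) auto
  next
    fix y assume "y \<in> f ` {1..k}"
    then obtain j where "1 \<le> j" "j \<le> k" "y = f j" by auto
    then show "y \<in> (\<lambda>j. f (k - j)) ` {0..<k}" by (intro image_eqI[of _ _ "k - j"]) auto
  qed
  then have "set L = S"
    using img by (simp add: L_def)
  moreover have "finite S"
    using img by blast
  ultimately have sorted: "sorted_list_of_set S = L"
    using sorted_list_of_set_unique[of S L] card by (simp add: L_def)
  fix i assume "i \<in> {1..k}"
  then show "kth_largest S i = f i"
    by (auto simp: kth_largest_def sorted rev_nth L_def)
qed

lemma down_closed_eq_atLeastAtMost:
  fixes P :: "nat set"
  assumes "finite P" and down: "\<And>i i'. i \<in> P \<Longrightarrow> 1 \<le> i' \<Longrightarrow> i' \<le> i \<Longrightarrow> i' \<in> P"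
    and pos: "\<And>i. i \<in> P \<Longrightarrow> 1 \<le> i"
  shows "P = {1..card P}"
proof (cases "P = {}")
  case False
  have "P = {1..Max P}"
  proof
    show "P \<subseteq> {1..Max P}"
      using pos \<open>finite P\<close> by auto
    show "{1..Max P} \<subseteq> P"
      using down[of "Max P"] Max_in[OF \<open>finite P\<close> False] by auto
  qed
  then show ?thesis
    by (metis card_atLeastAtMost diff_Suc_1)
qed simp

lemma up_closed_eq_atLeastLessThan:
  fixes B :: "nat set"
  assumes "finite B" "i \<in> B" and ge: "\<And>j. j \<in> B \<Longrightarrow> i \<le> j"
    and down: "\<And>j j'. j \<in> B \<Longrightarrow> i \<le> j' \<Longrightarrow> j' \<le> j \<Longrightarrow> j' \<in> B"
  shows "B = {i..<i + card B}"
proof -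
  have "B = {i..Max B}"
  proof
    show "B \<subseteq> {i..Max B}"
      using ge \<open>finite B\<close> by auto
    have "Max B \<in> B"
      using Max_in[OF \<open>finite B\<close>] \<open>i \<in> B\<close> by blast
    then show "{i..Max B} \<subseteq> B"
      using down[of "Max B"] by auto
  qed
  moreover have "i \<le> Max B"
    using \<open>finite B\<close> \<open>i \<in> B\<close> by simp
  ultimately obtain m where "B = {i..m}" "i \<le> m"
    by blast
  then show ?thesis
    by auto
qed

lemma components_eq_partition:
  fixes X :: "'a::topological_space set"
  assumes cover: "\<Union>A = X"
    and disj: "\<And>U V. U \<in> A \<Longrightarrow> V \<in> A \<Longrightarrow> U \<inter> V \<noteq> {} \<Longrightarrow> U = V"
    and parts: "\<And>U. U \<in> A \<Longrightarrow> connected U \<and> U \<noteq> {} \<and> openin (top_of_set X) U"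
  shows "components X = A"
proof -
  have subset: "D \<subseteq> U" if D: "connected D" "D \<subseteq> X" and U: "U \<in> A" "D \<inter> U \<noteq> {}" for D U
  proof -
    have "openin (top_of_set X) (\<Union>(A - {U}))"
      using parts by blast
    then obtain Q' where Q': "open Q'" "\<Union>(A - {U}) = X \<inter> Q'"
      by (auto simp: openin_open)
    obtain Q where Q: "open Q" "U = X \<inter> Q"
      using parts[OF U(1)] by (auto simp: openin_open)
    have "X = U \<union> \<Union>(A - {U})"
      using cover U(1) by blast
    then have "D \<subseteq> Q \<union> Q'"
      using D(2) Q Q' by blast
    moreover have "Q \<inter> Q' \<inter> D = {}"
      using D(2) Q Q' disj U(1) by blast
    ultimately have "Q' \<inter> D = {}"
      using connectedD[OF D(1) Q(1) Q'(1)] Q D U by blast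
    then show ?thesis
      using \<open>D \<subseteq> Q \<union> Q'\<close> D(2) Q by blast
  qed
  have components: "U \<in> components X" if "U \<in> A" for U
    unfolding in_components_maximal
    using parts[OF that] subset[OF _ _ that] cover that openin_imp_subset
    by (metis Int_absorb1 Sup_upper subset_antisym)
  show ?thesis
  proof
    show "A \<subseteq> components X"
      using components by blast
    show "components X \<subseteq> A"
    proof
      fix C assume C: "C \<in> components X"
      then obtain x where "x \<in> C" "x \<in> X"
        using in_components_nonempty in_components_subset by blast
      then obtain U where "U \<in> A" "x \<in> U"
        using cover by blast
      then show "C \<in> A"
        using components_eq[OF C components] \<open>x \<in> C\<close> by blast
    qed
  qed
qed

lemma lin_form_representation:
  fixes G :: "(nat \<Rightarrow> real) \<Rightarrow> real"
  assumes lin: "\<And>(f :: nat \<Rightarrow> nat \<Rightarrow> real) c.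
      G (\<lambda>j. \<Sum>i=1..n. c i * f i j) = (\<Sum>i=1..n. c i * G (f i))"
  obtains a where "a \<in> Rn n" and "\<And>x. x \<in> Rn n \<Longrightarrow> lin_form n a x = G x"
proof
  define d where "d i = (\<lambda>j. if j = i then 1 else (0::real))" for i :: nat
  show "(\<lambda>i. if i \<in> {1..n} then G (d i) else 0) \<in> Rn n"
    by (simp add: Rn_def)
  fix x assume x: "x \<in> Rn n"
  have "x = (\<lambda>j. \<Sum>i=1..n. x i * d i j)"
  proof
    fix j
    have "(\<Sum>i=1..n. x i * d i j) = (if j \<in> {1..n} then x j else 0)"
      by (simp add: d_def if_distrib[of "(*) _"] sum.delta' cong: if_cong)
    then show "x j = (\<Sum>i=1..n. x i * d i j)"
      using x by (auto simp: Rn_def)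
  qed
  then have "G x = (\<Sum>i=1..n. x i * G (d i))"
    using lin by metis
  then show "lin_form n (\<lambda>i. if i \<in> {1..n} then G (d i) else 0) x = G x"
    by (simp add: lin_form_def mult.commute)
qed

lemma closed_Rn: "closed (Rn n)"
proof -
  have "Rn n = (\<Inter>i\<in>- {1..n}. {x. x i = 0})"
    by (auto simp: Rn_def)
  then show ?thesis
    by (auto intro!: closed_INT closed_Collect_eq continuous_intros)
qed

lemma halfline_two_points:
  assumes "is_halfline n F"
  obtains y z where "y \<in> F" "z \<in> F" "y \<noteq> z"
proof -
  obtain p v where v: "v \<noteq> (\<lambda>i. 0)" and F: "F = ray_from p v"
    using assms by (auto simp: is_halfline_def)
  have "p \<in> F" "(\<lambda>i. p i + 1 * v i) \<in> F"
    unfolding F ray_from_def by (force, force)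
  moreover have "(\<lambda>i. p i + 1 * v i) \<noteq> p"
  proof
    assume eq: "(\<lambda>i. p i + 1 * v i) = p"
    have "v i = 0" for i
      using fun_cong[OF eq, of i] by simp
    then show False
      using v by auto
  qed
  ultimately show ?thesis
    using that by blast
qed

lemma halfline_through_0_multiples:
  assumes "is_halfline n F" "(\<lambda>i. 0) \<in> F"
  obtains v where "\<And>y. y \<in> F \<Longrightarrow> \<exists>s. y = (\<lambda>i. s * v i)"
proof -
  obtain p v where F: "F = ray_from p v"
    using assms(1) by (auto simp: is_halfline_def)
  then obtain t0 where "(\<lambda>i. 0::real) = (\<lambda>i. p i + t0 * v i)"
    using assms(2) unfolding ray_from_def by auto
  then have p: "p i = - t0 * v i" for i
    using fun_cong[of _ _ i] by fastforce
  have "\<exists>s. y = (\<lambda>i. s * v i)" if "y \<in> F" for y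
  proof -
    obtain t where "y = (\<lambda>i. p i + t * v i)"
      using \<open>y \<in> F\<close> F unfolding ray_from_def by blast
    then have "y = (\<lambda>i. (t - t0) * v i)"
      by (simp add: p algebra_simps)
    then show ?thesis
      by blast
  qed
  then show ?thesis
    using that by blast
qed

section \<open>The Weyl chamber and the complement of the arrangement\<close>

lemma Wc_antimono:
  assumes "x \<in> Wc n" "1 \<le> i" "i \<le> j" "j \<le> n"
  shows "x j \<le> x i"
  using assms(3,4)
proof (induction j rule: dec_induct)
  case (step m)
  then have "x (Suc m) \<le> x m"
    using assms(1,2) by (auto simp: Wc_def)
  then show ?case
    using step by simp
qed simp

lemma W0_strict_antimono:
  assumes "x \<in> W0 n" "1 \<le> i" "i < j" "j \<le> n"
  shows "x j < x i"
  using Suc_leI[OF assms(3)] assms(4)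
proof (induction j rule: dec_induct)
  case base
  then show ?case
    using assms(1,2) by (auto simp: W0_def)
next
  case (step m)
  then have "x (Suc m) < x m"
    using assms(1,2) by (auto simp: W0_def)
  then show ?case
    using step by simp
qed

lemma W0_subset_Wc: "W0 n \<subseteq> Wc n"
  by (auto simp: W0_def Wc_def less_imp_le)

lemma generic_point_iff:
  "x \<in> W0 n - arr_union n \<longleftrightarrow> x \<in> Wc n \<and> (\<forall>i\<in>{1..n}. x i \<noteq> 0) \<and>
     (\<forall>i\<in>{1..n}. \<forall>j\<in>{1..n}. i < j \<longrightarrow> \<bar>x i\<bar> \<noteq> \<bar>x j\<bar>)"
    (is "_ \<longleftrightarrow> _ \<and> ?nonzero \<and> ?distinct")
proof
  assume x: "x \<in> W0 n - arr_union n"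
  then have Rn: "x \<in> Rn n"
    by (simp add: W0_def)
  have off_hyp: "x \<notin> hyp n i j" if "i \<in> {1..n}" "j \<in> {i..n}" for i j
    using x that by (auto simp: arr_union_def)
  have ?nonzero
  proof
    fix i assume "i \<in> {1..n}"
    then show "x i \<noteq> 0"
      using off_hyp[of i i] Rn by (auto simp: hyp_def)
  qed
  moreover have "\<bar>x i\<bar> \<noteq> \<bar>x j\<bar>" if "i \<in> {1..n}" "j \<in> {1..n}" "i < j" for i j
  proof -
    have "x i + x j \<noteq> 0"
      using off_hyp[of i j] Rn that by (auto simp: hyp_def)
    moreover have "x j < x i"
      using x that W0_strict_antimono by auto
    ultimately show ?thesis
      by (auto simp: abs_if)
  qed
  ultimately show "x \<in> Wc n \<and> ?nonzero \<and> ?distinct"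
    using x W0_subset_Wc by blast
next
  assume x: "x \<in> Wc n \<and> ?nonzero \<and> ?distinct"
  have "x (Suc i) < x i" if "1 \<le> i" "i < n" for i
  proof -
    have "x (Suc i) \<le> x i" "\<bar>x i\<bar> \<noteq> \<bar>x (Suc i)\<bar>"
      using x that by (auto simp: Wc_def)
    then show ?thesis
      by linarith
  qed
  then have "x \<in> W0 n"
    using x by (auto simp: W0_def Wc_def)
  moreover have "x \<notin> hyp n i j" if "i \<in> {1..n}" "j \<in> {i..n}" for i j
  proof (cases "i = j")
    case False
    then have "\<bar>x i\<bar> \<noteq> \<bar>x j\<bar>"
      using x that by auto
    then show ?thesis
      using False by (auto simp: hyp_def)
  qed (use x that in \<open>auto simp: hyp_def\<close>)
  ultimately show "x \<in> W0 n - arr_union n"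
    by (auto simp: arr_union_def)
qed

definition abs_rank :: "nat \<Rightarrow> (nat \<Rightarrow> real) \<Rightarrow> nat \<Rightarrow> nat" where
  "abs_rank n x i = card {j \<in> {1..n}. \<bar>x j\<bar> \<le> \<bar>x i\<bar>}"

text \<open>The set \<open>S\<close> with \<open>x \<in> C(S)\<close>: for \<open>x\<close> in the complement of the arrangement, row \<open>i\<close> of
  the sign tableau has as many plus signs as there are coordinates of modulus at most \<open>x i\<close>.\<close>
definition chamber_label :: "nat \<Rightarrow> (nat \<Rightarrow> real) \<Rightarrow> nat set" where
  "chamber_label n x = abs_rank n x ` {i \<in> {1..n}. 0 < x i}"

lemma abs_rank_bounds: "i \<in> {1..n} \<Longrightarrow> 1 \<le> abs_rank n x i \<and> abs_rank n x i \<le> n"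
proof -
  assume i: "i \<in> {1..n}"
  then have "i \<in> {j \<in> {1..n}. \<bar>x j\<bar> \<le> \<bar>x i\<bar>}"
    by simp
  then have "0 < abs_rank n x i"
    unfolding abs_rank_def by (auto simp: card_gt_0_iff)
  moreover have "abs_rank n x i \<le> card {1..n}"
    unfolding abs_rank_def by (intro card_mono) auto
  ultimately show ?thesis
    by simp
qed

lemma abs_rank_less:
  assumes "j \<in> {1..n}" "\<bar>x i\<bar> < \<bar>x j\<bar>"
  shows "abs_rank n x i < abs_rank n x j"
proof -
  have "{j \<in> {1..n}. \<bar>x j\<bar> \<le> \<bar>x i\<bar>} \<subseteq> {j' \<in> {1..n}. \<bar>x j'\<bar> \<le> \<bar>x j\<bar>}"
    "j \<in> {j' \<in> {1..n}. \<bar>x j'\<bar> \<le> \<bar>x j\<bar>}" "j \<notin> {j \<in> {1..n}. \<bar>x j\<bar> \<le> \<bar>x i\<bar>}"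
    using assms by auto
  then have "{j \<in> {1..n}. \<bar>x j\<bar> \<le> \<bar>x i\<bar>} \<subset> {j' \<in> {1..n}. \<bar>x j'\<bar> \<le> \<bar>x j\<bar>}"
    by blast
  then show ?thesis
    unfolding abs_rank_def by (intro psubset_card_mono) auto
qed

locale generic_point =
  fixes n :: nat and x :: "nat \<Rightarrow> real"
  assumes generic: "x \<in> W0 n - arr_union n"
begin

lemma antimono: "1 \<le> i \<Longrightarrow> i \<le> j \<Longrightarrow> j \<le> n \<Longrightarrow> x j \<le> x i"
  using Wc_antimono generic W0_subset_Wc by blast

lemma strict_antimono: "1 \<le> i \<Longrightarrow> i < j \<Longrightarrow> j \<le> n \<Longrightarrow> x j < x i"
  using W0_strict_antimono generic by blast

lemma add_coords_nonzero:
  assumes i: "i \<in> {1..n}" "0 < x i" and j: "j \<in> {i..n}"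
  shows "x i + x j \<noteq> 0"
proof (cases "j = i")
  case False
  then have "i < j" "j \<in> {1..n}"
    using i j by auto
  then have "\<bar>x i\<bar> \<noteq> \<bar>x j\<bar>"
    using generic generic_point_iff[of x n] i by blast
  then show ?thesis
    by auto
qed (use i in simp)

definition npos_coords where "npos_coords = card {i \<in> {1..n}. 0 < x i}"

lemma positive_coords: "{i \<in> {1..n}. 0 < x i} = {1..npos_coords}"
  unfolding npos_coords_def
  by (rule down_closed_eq_atLeastAtMost) (auto intro: less_le_trans[OF _ antimono])

lemma sign_row:
  assumes i: "i \<in> {1..n}" "0 < x i"
  shows "{j \<in> {i..n}. 0 \<le> x i + x j} = {i..<i + abs_rank n x i}"
proof -
  define B where "B = {j \<in> {i..n}. 0 \<le> x i + x j}"
  have "{j \<in> {1..n}. \<bar>x j\<bar> \<le> \<bar>x i\<bar>} = B"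
  proof (intro equalityI subsetI)
    fix j assume j: "j \<in> {j \<in> {1..n}. \<bar>x j\<bar> \<le> \<bar>x i\<bar>}"
    then have "\<not> j < i"
      using strict_antimono[of j i] i by auto
    then show "j \<in> B"
      using j i by (auto simp: B_def)
  next
    fix j assume j: "j \<in> B"
    then have "x j \<le> x i"
      using antimono i by (auto simp: B_def)
    then show "j \<in> {j \<in> {1..n}. \<bar>x j\<bar> \<le> \<bar>x i\<bar>}"
      using j i by (auto simp: B_def)
  qed
  moreover have "B = {i..<i + card B}"
  proof (rule up_closed_eq_atLeastLessThan)
    fix j j' assume "j \<in> B" "i \<le> j'" "j' \<le> j"
    moreover from this have "x j \<le> x j'"
      using antimono i by (auto simp: B_def)
    ultimately show "j' \<in> B"
      by (auto simp: B_def)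
  qed (use i in \<open>auto simp: B_def\<close>)
  ultimately show ?thesis
    by (simp add: B_def abs_rank_def)
qed

lemma kth_largest_chamber_label:
  shows "card (chamber_label n x) = npos_coords"
    and "\<And>i. i \<in> {1..npos_coords} \<Longrightarrow> kth_largest (chamber_label n x) i = abs_rank n x i"
proof -
  have decreasing: "abs_rank n x j < abs_rank n x i" if "1 \<le> i" "i < j" "j \<le> npos_coords" for i j
  proof -
    have "i \<in> {1..npos_coords}" "j \<in> {1..npos_coords}"
      using that by auto
    then have "i \<in> {1..n}" "0 < x j" "j \<le> n"
      unfolding positive_coords[symmetric] by auto
    moreover have "x j < x i"
      using strict_antimono that calculation by simp
    ultimately show ?thesis
      using abs_rank_less[where i = j and j = i] by simp
  qed
  have image: "abs_rank n x ` {1..npos_coords} = chamber_label n x"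
    unfolding chamber_label_def positive_coords ..
  show "card (chamber_label n x) = npos_coords"
    using kth_largest_eqI(1)[OF decreasing image] by simp
  show "kth_largest (chamber_label n x) i = abs_rank n x i" if "i \<in> {1..npos_coords}" for i
    using kth_largest_eqI(2)[OF decreasing image that] by simp
qed

lemma mem_Cset_chamber_label: "chamber_label n x \<subseteq> {1..n} \<and> x \<in> Cset n (chamber_label n x)"
proof
  show "chamber_label n x \<subseteq> {1..n}"
    using abs_rank_bounds by (auto simp: chamber_label_def)
  show "x \<in> Cset n (chamber_label n x)"
    unfolding Cset_def
  proof (safe intro!: W0_subset_Wc[THEN subsetD] generic[THEN DiffD1])
    fix i j assume ij: "1 \<le> i" "i \<le> j" "j \<le> n"
    show "if i \<le> card (chamber_label n x) \<and> j \<le> i + kth_largest (chamber_label n x) i - 1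
      then 0 \<le> x i + x j else x i + x j \<le> 0"
    proof (cases "i \<le> npos_coords")
      case True
      then have i: "i \<in> {1..npos_coords}"
        using ij by simp
      then have xi: "i \<in> {1..n}" "0 < x i"
        unfolding positive_coords[symmetric] by auto
      have "j \<in> {j \<in> {i..n}. 0 \<le> x i + x j} \<longleftrightarrow> j \<in> {i..<i + abs_rank n x i}"
        using sign_row[OF xi] by simp
      then have "0 \<le> x i + x j \<longleftrightarrow> j \<in> {i..<i + abs_rank n x i}"
        using ij by simp
      moreover have "i \<le> card (chamber_label n x) \<and> j \<le> i + kth_largest (chamber_label n x) i - 1
          \<longleftrightarrow> j \<in> {i..<i + abs_rank n x i}"
        using kth_largest_chamber_label(1) kth_largest_chamber_label(2)[OF i] True ij
          abs_rank_bounds[OF xi(1)] by auto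
      ultimately show ?thesis
        by (cases "0 \<le> x i + x j") auto
    next
      case False
      then have "i \<notin> {1..npos_coords}"
        by simp
      then have "x i \<le> 0"
        using ij unfolding positive_coords[symmetric] by auto
      moreover have "x j \<le> x i"
        using antimono ij by simp
      ultimately show ?thesis
        using False kth_largest_chamber_label(1) by simp
    qed
  qed
qed

end

section \<open>The cone \<open>C(S)\<close> and its dual basis\<close>

locale subset_chamber =
  fixes n :: nat and S :: "nat set"
  assumes S_subset: "S \<subseteq> {1..n}"
begin

definition k where "k = card S"
definition a where "a = kth_largest S"
definition tail_count where "tail_count t = card (S \<inter> {t..})"
definition npos where "npos m = pi_S n S m"
definition nneg where "nneg m = m - npos m"
definition marked where "marked m \<longleftrightarrow> n - m + 1 \<in> S"

text \<open>The vector \<open>e_m\<close> arises from \<open>e_(m-1)\<close> by changing the single coordinate \<open>pivot m\<close>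
  from \<open>0\<close> to \<open>sign m\<close>; the forms \<open>dual_form m\<close> are the dual basis of the \<open>e_m\<close>.\<close>
definition pivot where "pivot m = (if marked m then npos m else n + 1 - nneg m)"
definition sign :: "nat \<Rightarrow> real" where "sign m = (if marked m then 1 else -1)"
definition tail_form where
  "tail_form m x = (if 1 \<le> m \<and> m \<le> n then sign m * x (pivot m) else 0)"
definition dual_form where "dual_form m x = tail_form m x - tail_form (Suc m) x"

abbreviation E where "E \<equiv> e_vec n S"

definition lincomb :: "(nat \<Rightarrow> real) \<Rightarrow> nat \<Rightarrow> real" where
  "lincomb c = (\<lambda>i. \<Sum>l=1..n. c l * E l i)"

lemma finite_S: "finite S"
  using S_subset finite_subset by blast

lemma k_le: "k \<le> n"
  unfolding k_def using card_mono[OF _ S_subset] by simp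

lemma tail_count_antimono: "t \<le> t' \<Longrightarrow> tail_count t' \<le> tail_count t"
  unfolding tail_count_def using finite_S by (intro card_mono) auto

lemma tail_count_le_add: "t \<le> t' \<Longrightarrow> tail_count t \<le> tail_count t' + (t' - t)"
proof -
  assume "t \<le> t'"
  have "S \<inter> {t..} \<subseteq> (S \<inter> {t'..}) \<union> {t..<t'}"
    by auto
  then have "tail_count t \<le> card ((S \<inter> {t'..}) \<union> {t..<t'})"
    unfolding tail_count_def using finite_S by (intro card_mono) auto
  also have "\<dots> \<le> tail_count t' + card {t..<t'}"
    unfolding tail_count_def by (rule card_Un_le)
  finally show ?thesis
    by simp
qed

lemma tail_count_Suc: "t \<in> S \<Longrightarrow> tail_count t = Suc (tail_count (Suc t))"
proof -
  assume "t \<in> S"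
  then have "S \<inter> {t..} = insert t (S \<inter> {Suc t..})"
    by auto
  then show ?thesis
    unfolding tail_count_def using finite_S by simp
qed

lemma tail_count_eq_0: "n < t \<Longrightarrow> tail_count t = 0"
proof -
  assume "n < t"
  then have "S \<inter> {t..} = {}"
    using S_subset by auto
  then show ?thesis
    by (simp add: tail_count_def)
qed

lemma tail_count_1: "tail_count 1 = k"
proof -
  have "S \<inter> {1..} = S"
    using S_subset by auto
  then show ?thesis
    by (simp add: tail_count_def k_def)
qed

lemma a_strict_antimono: "1 \<le> i \<Longrightarrow> i < j \<Longrightarrow> j \<le> k \<Longrightarrow> a j < a i"
  unfolding a_def k_def using kth_largest_less finite_S by blast

lemma a_image: "a ` {1..k} = S"
  unfolding a_def k_def using kth_largest_image finite_S by blast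

lemma a_in_S: "i \<in> {1..k} \<Longrightarrow> a i \<in> S"
  using a_image by blast

lemma tail_count_a:
  assumes "i \<in> {1..k}"
  shows "tail_count (a i) = i"
proof -
  have "S \<inter> {a i..} = a ` {1..i}"
  proof (intro equalityI subsetI)
    fix s assume s: "s \<in> S \<inter> {a i..}"
    then obtain j where j: "j \<in> {1..k}" "s = a j"
      using a_image by blast
    then have "j \<le> i"
      using a_strict_antimono[of i j] assms s by (metis IntE atLeastAtMost_iff atLeast_iff leD leI)
    then show "s \<in> a ` {1..i}"
      using j by auto
  next
    fix s assume "s \<in> a ` {1..i}"
    then obtain j where j: "j \<in> {1..i}" "s = a j"
      by auto
    then have "a i \<le> a j"
      using a_strict_antimono[of j i] assms by (cases "j = i") auto
    then show "s \<in> S \<inter> {a i..}"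
      using a_in_S j assms by auto
  qed
  moreover have "inj_on a {1..i}"
    by (rule inj_onI) (metis a_strict_antimono assms atLeastAtMost_iff le_trans linorder_neqE_nat less_irrefl)
  ultimately show ?thesis
    unfolding tail_count_def by (simp add: card_image)
qed

lemma le_tail_count_iff:
  assumes "i \<in> {1..k}"
  shows "i \<le> tail_count t \<longleftrightarrow> t \<le> a i"
proof
  assume "t \<le> a i"
  then show "i \<le> tail_count t"
    using tail_count_antimono tail_count_a assms by metis
next
  assume i: "i \<le> tail_count t"
  show "t \<le> a i"
  proof (rule ccontr)
    assume "\<not> t \<le> a i"
    then have "tail_count t \<le> tail_count (Suc (a i))"
      by (intro tail_count_antimono) auto
    then show False
      using i tail_count_Suc[OF a_in_S[OF assms]] tail_count_a[OF assms] by simp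
  qed
qed

lemma a_tail_count:
  assumes "t \<in> S"
  shows "tail_count t \<in> {1..k}" and "a (tail_count t) = t"
proof -
  obtain j where "j \<in> {1..k}" "t = a j"
    using a_image assms by blast
  then show "tail_count t \<in> {1..k}" "a (tail_count t) = t"
    using tail_count_a by auto
qed

lemma a_bounds:
  assumes "i \<in> {1..k}"
  shows "1 \<le> a i" and "a i + i \<le> n + 1"
proof -
  show "1 \<le> a i"
    using a_in_S[OF assms] S_subset by auto
  have "a i \<le> n"
    using a_in_S[OF assms] S_subset by auto
  then have "tail_count (a i) \<le> tail_count (n + 1) + (n + 1 - a i)"
    by (intro tail_count_le_add) auto
  then show "a i + i \<le> n + 1"
    using tail_count_a[OF assms] tail_count_eq_0[of "n + 1"] \<open>a i \<le> n\<close> by simp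
qed

lemma npos_eq_tail_count: "npos m = tail_count (n - m + 1)"
  by (simp add: npos_def pi_S_def tail_count_def)

lemma npos_eq_card:
  assumes "m \<le> n"
  shows "npos m = card {j \<in> {1..m}. marked j}"
proof -
  have "S \<inter> {n - m + 1..} = (\<lambda>j. n - j + 1) ` {j \<in> {1..m}. marked j}"
  proof (intro equalityI subsetI)
    fix s assume s: "s \<in> S \<inter> {n - m + 1..}"
    then have "1 \<le> s" "s \<le> n"
      using S_subset by auto
    then show "s \<in> (\<lambda>j. n - j + 1) ` {j \<in> {1..m}. marked j}"
      using s assms by (intro image_eqI[of _ _ "n + 1 - s"]) (auto simp: marked_def)
  qed (use assms in \<open>auto simp: marked_def\<close>)
  moreover have "inj_on (\<lambda>j. n - j + 1) {j \<in> {1..m}. marked j}"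
    using assms by (intro inj_onI) auto
  ultimately show ?thesis
    by (simp add: npos_eq_tail_count tail_count_def card_image)
qed

lemma nneg_eq_card:
  assumes "m \<le> n"
  shows "nneg m = card {j \<in> {1..m}. \<not> marked j}" and "npos m \<le> m"
proof -
  have "{1..m} = {j \<in> {1..m}. marked j} \<union> {j \<in> {1..m}. \<not> marked j}"
    by auto
  then have "m = card {j \<in> {1..m}. marked j} + card {j \<in> {1..m}. \<not> marked j}"
    by (metis (no_types, lifting) card_Un_disjoint card_atLeastAtMost diff_Suc_1 disjoint_iff
        finite_Un finite_atLeastAtMost mem_Collect_eq)
  then show "nneg m = card {j \<in> {1..m}. \<not> marked j}" "npos m \<le> m"
    using npos_eq_card[OF assms] by (auto simp: nneg_def)
qed

lemma npos_add_nneg: "m \<le> n \<Longrightarrow> npos m + nneg m = m"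
  using nneg_eq_card(2) by (simp add: nneg_def)

lemma npos_mono: "l \<le> m \<Longrightarrow> m \<le> n \<Longrightarrow> npos l \<le> npos m"
  using npos_eq_card by (auto intro!: card_mono)

lemma nneg_mono: "l \<le> m \<Longrightarrow> m \<le> n \<Longrightarrow> nneg l \<le> nneg m"
  using nneg_eq_card by (auto intro!: card_mono)

lemma npos_less_marked:
  assumes "l < m" "m \<le> n" "marked m"
  shows "npos l < npos m"
proof -
  have "{j \<in> {1..l}. marked j} \<subseteq> {j \<in> {1..m}. marked j}"
    "m \<in> {j \<in> {1..m}. marked j}" "m \<notin> {j \<in> {1..l}. marked j}"
    using assms by auto
  then have "{j \<in> {1..l}. marked j} \<subset> {j \<in> {1..m}. marked j}"
    by blast
  then show ?thesis
    using npos_eq_card[of l] npos_eq_card[of m] assms by (simp add: psubset_card_mono)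
qed

lemma nneg_less_unmarked:
  assumes "l < m" "m \<le> n" "\<not> marked m"
  shows "nneg l < nneg m"
proof -
  have "{j \<in> {1..l}. \<not> marked j} \<subseteq> {j \<in> {1..m}. \<not> marked j}"
    "m \<in> {j \<in> {1..m}. \<not> marked j}" "m \<notin> {j \<in> {1..l}. \<not> marked j}"
    using assms by auto
  then have "{j \<in> {1..l}. \<not> marked j} \<subset> {j \<in> {1..m}. \<not> marked j}"
    by blast
  then show ?thesis
    using nneg_eq_card(1)[of l] nneg_eq_card(1)[of m] assms by (simp add: psubset_card_mono)
qed

lemma npos_le_add:
  assumes "l \<le> m" "m \<le> n"
  shows "npos m \<le> npos l + (m - l)"
  using nneg_mono[OF assms] npos_add_nneg[of l] npos_add_nneg[of m] assms by simp

lemma npos_n: "npos n = k"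
  using npos_eq_tail_count tail_count_1 by simp

lemma nneg_n: "nneg n = n - k"
  using npos_n by (simp add: nneg_def)

lemma npos_le_k: "m \<le> n \<Longrightarrow> npos m \<le> k"
  using npos_mono[of m n] npos_n by simp

lemma nneg_le: "m \<le> n \<Longrightarrow> nneg m \<le> n - k"
  using nneg_mono[of m n] nneg_n by simp

lemma npos_pos: "1 \<le> m \<Longrightarrow> m \<le> n \<Longrightarrow> marked m \<Longrightarrow> 1 \<le> npos m"
  using npos_less_marked[of 0 m] by simp

lemma nneg_pos: "1 \<le> m \<Longrightarrow> m \<le> n \<Longrightarrow> \<not> marked m \<Longrightarrow> 1 \<le> nneg m"
  using nneg_less_unmarked[of 0 m] by simp

lemma npos_Suc: "m < n \<Longrightarrow> npos (Suc m) = npos m + (if marked (Suc m) then 1 else 0)"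
  using npos_less_marked[of m "Suc m"] npos_le_add[of m "Suc m"] nneg_less_unmarked[of m "Suc m"]
    npos_mono[of m "Suc m"] npos_add_nneg[of m] npos_add_nneg[of "Suc m"] by auto

lemma a_npos_marked: "marked m \<Longrightarrow> a (npos m) = n - m + 1"
  using a_tail_count(2)[of "n - m + 1"] by (simp add: marked_def npos_eq_tail_count)

lemma pivot_range:
  assumes "1 \<le> m" "m \<le> n"
  shows "1 \<le> pivot m" "pivot m \<le> n" "marked m \<Longrightarrow> pivot m \<le> k" "\<not> marked m \<Longrightarrow> k < pivot m"
  using assms npos_pos[OF assms] nneg_pos[OF assms] npos_le_k[OF assms(2)] nneg_le[OF assms(2)] k_le
  by (auto simp: pivot_def)

lemma inj_on_pivot: "inj_on pivot {1..n}"
proof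
  fix m m' assume m: "m \<in> {1..n}" and m': "m' \<in> {1..n}" and eq: "pivot m = pivot m'"
  have "\<not> m < m'" if "m \<in> {1..n}" "m' \<in> {1..n}" "pivot m = pivot m'" for m m'
    using that pivot_range[of m] pivot_range[of m'] npos_less_marked[of m m']
      nneg_less_unmarked[of m m'] nneg_le[of m'] by (auto simp: pivot_def split: if_splits)
  then show "m = m'"
    using m m' eq by (metis linorder_neqE_nat)
qed

lemma pivot_image: "pivot ` {1..n} = {1..n}"
  using inj_on_pivot pivot_range by (intro endo_inj_surj) auto

lemma e_vec_pivot:
  assumes "m \<in> {1..n}" "l \<in> {1..n}"
  shows "E l (pivot m) = (if m \<le> l then sign m else 0)"
proof -
  have bounds: "1 \<le> pivot m" "pivot m \<le> n" "npos l + nneg l = l" "npos m + nneg m = m"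
    "npos l \<le> k" "nneg m \<le> n - k"
    using pivot_range npos_add_nneg npos_le_k nneg_le k_le assms by auto
  show ?thesis
  proof (cases "m \<le> l")
    case True
    then have "npos m \<le> npos l" "nneg m \<le> nneg l"
      using assms npos_mono nneg_mono by auto
    then show ?thesis
      using True bounds assms by (auto simp: e_vec_def sign_def pivot_def npos_def[symmetric])
  next
    case False
    then have "marked m \<Longrightarrow> npos l < npos m" "\<not> marked m \<Longrightarrow> nneg l < nneg m"
      "npos m \<le> npos l + (m - l)"
      using assms npos_less_marked nneg_less_unmarked npos_le_add by auto
    then show ?thesis
      using False bounds assms by (auto simp: e_vec_def sign_def pivot_def npos_def[symmetric])
  qed
qed

lemma sign_mult_self: "sign m * sign m = 1"
  by (simp add: sign_def)

lemma e_vec_Rn: "E l \<in> Rn n"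
  by (auto simp: Rn_def e_vec_def)

lemma lincomb_Rn: "lincomb c \<in> Rn n"
  by (auto simp: Rn_def lincomb_def e_vec_def)

lemma tail_form_lincomb:
  assumes "1 \<le> m" "m \<le> n + 1"
  shows "tail_form m (lincomb c) = (\<Sum>l=m..n. c l)"
proof (cases "m \<le> n")
  case True
  then have m: "m \<in> {1..n}"
    using assms by auto
  have "tail_form m (lincomb c) = (\<Sum>l=1..n. c l * (sign m * E l (pivot m)))"
    using m by (simp add: tail_form_def lincomb_def sum_distrib_left algebra_simps)
  also have "\<dots> = (\<Sum>l=1..n. if m \<le> l then c l else 0)"
    by (intro sum.cong refl) (simp add: e_vec_pivot[OF m] sign_mult_self)
  also have "\<dots> = (\<Sum>l\<in>{l\<in>{1..n}. m \<le> l}. c l)"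
    by (rule sum.inter_filter[symmetric]) simp
  also have "{l\<in>{1..n}. m \<le> l} = {m..n}"
    using assms by auto
  finally show ?thesis .
qed (simp add: tail_form_def)

lemma dual_form_lincomb: "m \<in> {1..n} \<Longrightarrow> dual_form m (lincomb c) = c m"
  by (simp add: dual_form_def tail_form_lincomb sum.atLeast_Suc_atMost)

lemma tail_form_eq_sum:
  assumes "1 \<le> m" "m \<le> n + 1"
  shows "tail_form m x = (\<Sum>l=m..n. dual_form l x)"
  using sum_Suc_diff[of m "n + 1" "\<lambda>j. - tail_form j x"] assms
  by (simp add: dual_form_def tail_form_def)

lemma pivot_eq_tail_form: "m \<in> {1..n} \<Longrightarrow> y (pivot m) = sign m * tail_form m y"
  by (auto simp: tail_form_def mult.assoc[symmetric] sign_mult_self)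

lemma lincomb_dual_form:
  assumes "x \<in> Rn n"
  shows "lincomb (\<lambda>l. dual_form l x) = x"
proof
  fix i
  show "lincomb (\<lambda>l. dual_form l x) i = x i"
  proof (cases "i \<in> {1..n}")
    case False
    then show ?thesis
      using lincomb_Rn assms by (auto simp: Rn_def)
  next
    case True
    then obtain m where m: "m \<in> {1..n}" "i = pivot m"
      using pivot_image by blast
    have "tail_form m (lincomb (\<lambda>l. dual_form l x)) = tail_form m x"
      using m tail_form_lincomb tail_form_eq_sum by auto
    then show ?thesis
      using pivot_eq_tail_form[OF m(1)] m(2) by metis
  qed
qed

lemma CsetI:
  assumes "x \<in> Wc n"
    and "\<And>i j. 1 \<le> i \<Longrightarrow> i \<le> j \<Longrightarrow> j \<le> n \<Longrightarrow>
      (if i \<le> k \<and> j \<le> i + a i - 1 then 0 \<le> x i + x j else x i + x j \<le> 0)"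
  shows "x \<in> Cset n S"
  using assms unfolding Cset_def k_def a_def by auto

lemma Cset_tableau:
  assumes "x \<in> Cset n S" "1 \<le> i" "i \<le> j" "j \<le> n"
  shows "if i \<le> k \<and> j \<le> i + a i - 1 then 0 \<le> x i + x j else x i + x j \<le> 0"
  using assms unfolding Cset_def k_def a_def by auto

lemma Cset_antimono: "x \<in> Cset n S \<Longrightarrow> 1 \<le> i \<Longrightarrow> i < n \<Longrightarrow> x (Suc i) \<le> x i"
  unfolding Cset_def Wc_def by auto

lemma Cset_subset_Rn: "Cset n S \<subseteq> Rn n"
  unfolding Cset_def Wc_def by auto

text \<open>In each case below, \<open>dual_form m x \<ge> 0\<close> is either one of the inequalities of \<open>W\<close>
  or the sign condition at the boundary of the plus signs in row \<open>npos m\<close> or \<open>npos m + 1\<close>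
  of the tableau.\<close>

lemma dual_form_last_nonneg:
  assumes x: "x \<in> Cset n S" and "1 \<le> n"
  shows "0 \<le> dual_form n x"
proof (cases "marked n")
  case True
  then have "a k = 1" "1 \<le> k"
    using a_tail_count[of 1] tail_count_1 npos_pos[of n] npos_n assms by (auto simp: marked_def)
  moreover have "pivot n = k"
    using True npos_n by (simp add: pivot_def)
  moreover have "0 \<le> x k + x k"
    using Cset_tableau[OF x, of k k] calculation k_le by simp
  ultimately show ?thesis
    using True k_le by (simp add: dual_form_def tail_form_def sign_def)
next
  case False
  then have "k < n"
    using nneg_pos[of n] nneg_n assms by auto
  moreover have "pivot n = k + 1"
    using False nneg_n calculation by (simp add: pivot_def)
  moreover have "x (k + 1) + x (k + 1) \<le> 0"
    using Cset_tableau[OF x, of "k + 1" "k + 1"] calculation by simp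
  ultimately show ?thesis
    using False by (simp add: dual_form_def tail_form_def sign_def)
qed

lemma dual_form_marked_nonneg:
  assumes x: "x \<in> Cset n S" and m: "1 \<le> m" "m < n" and "marked m"
  shows "0 \<le> dual_form m x"
proof -
  have p: "1 \<le> npos m" "npos m \<le> k" "npos (Suc m) \<le> k"
    using npos_pos npos_le_k m assms by auto
  have step: "npos (Suc m) = npos m + (if marked (Suc m) then 1 else 0)"
    using npos_Suc m by simp
  show ?thesis
  proof (cases "marked (Suc m)")
    case True
    then have "x (Suc (npos m)) \<le> x (npos m)"
      using Cset_antimono[OF x p(1)] step p k_le by simp
    then show ?thesis
      using m True step \<open>marked m\<close> by (simp add: dual_form_def tail_form_def pivot_def sign_def)
  next
    case False
    have "npos m \<le> n - m + npos m" "n - m + npos m \<le> n"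
      "n - m + npos m \<le> npos m + a (npos m) - 1"
      using a_npos_marked[OF \<open>marked m\<close>] m nneg_eq_card(2)[of m] by auto
    then have "0 \<le> x (npos m) + x (n - m + npos m)"
      using Cset_tableau[OF x p(1), of "n - m + npos m"] p(2) by auto
    moreover have "pivot (Suc m) = n - m + npos m"
      using False step npos_add_nneg[of m] npos_add_nneg[of "Suc m"] m
      by (simp add: pivot_def)
    ultimately show ?thesis
      using m False \<open>marked m\<close> by (simp add: dual_form_def tail_form_def pivot_def sign_def)
  qed
qed

lemma dual_form_unmarked_nonneg:
  assumes x: "x \<in> Cset n S" and m: "1 \<le> m" "m < n" and "\<not> marked m"
  shows "0 \<le> dual_form m x"
proof -
  have q: "1 \<le> nneg m" "nneg (Suc m) \<le> n - k" "npos m \<le> k"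
    using nneg_pos nneg_le npos_le_k m assms by auto
  have sums: "npos m + nneg m = m" "npos (Suc m) + nneg (Suc m) = Suc m"
    using npos_add_nneg m by auto
  have step: "npos (Suc m) = npos m + (if marked (Suc m) then 1 else 0)"
    using npos_Suc m by simp
  show ?thesis
  proof (cases "marked (Suc m)")
    case True
    have "a (npos m + 1) = n - m"
      using a_npos_marked[OF True] step True m by simp
    then have "npos m + 1 \<le> n + 1 - m + npos m" "n + 1 - m + npos m \<le> n"
      "\<not> n + 1 - m + npos m \<le> npos m + 1 + a (npos m + 1) - 1"
      using q sums m by auto
    then have "x (npos m + 1) + x (n + 1 - m + npos m) \<le> 0"
      using Cset_tableau[OF x, of "npos m + 1" "n + 1 - m + npos m"] by auto
    moreover have "pivot m = n + 1 - m + npos m"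
      using \<open>\<not> marked m\<close> sums m q by (simp add: pivot_def)
    ultimately show ?thesis
      using m True step \<open>\<not> marked m\<close> by (simp add: dual_form_def tail_form_def pivot_def sign_def)
  next
    case False
    then have "nneg (Suc m) = nneg m + 1"
      using step sums by simp
    then have "x (Suc (n - nneg m)) \<le> x (n - nneg m)" "Suc (n - nneg m) = n + 1 - nneg m"
      using Cset_antimono[OF x, of "n - nneg m"] q m by auto
    then show ?thesis
      using m False \<open>\<not> marked m\<close> \<open>nneg (Suc m) = nneg m + 1\<close>
      by (simp add: dual_form_def tail_form_def pivot_def sign_def)
  qed
qed

lemma dual_form_nonneg: "x \<in> Cset n S \<Longrightarrow> m \<in> {1..n} \<Longrightarrow> 0 \<le> dual_form m x"
  using dual_form_last_nonneg dual_form_marked_nonneg dual_form_unmarked_nonneg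
  by (cases "m = n") (auto, metis le_neq_implies_less)

lemma a_add_le_npos:
  assumes i: "i \<in> {1..k}" and "npos l < i"
  shows "a i + i \<le> npos l + (n - l) + 1"
proof -
  have "a i < n - l + 1"
    using le_tail_count_iff[OF i, of "n - l + 1"] assms by (simp add: npos_eq_tail_count)
  then have "tail_count (a i) \<le> tail_count (n - l + 1) + (n - l + 1 - a i)"
    by (intro tail_count_le_add) auto
  then show ?thesis
    using tail_count_a[OF i] \<open>a i < n - l + 1\<close> by (simp add: npos_eq_tail_count)
qed

lemma npos_le_a_add:
  assumes i: "i \<in> {1..k}" and "i \<le> npos l"
  shows "npos l + (n - l) + 1 \<le> a i + i"
proof -
  have "n - l + 1 \<le> a i"
    using le_tail_count_iff[OF i, of "n - l + 1"] assms by (simp add: npos_eq_tail_count)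
  then have "tail_count (n - l + 1) \<le> tail_count (a i) + (a i - (n - l + 1))"
    by (intro tail_count_le_add) auto
  then show ?thesis
    using tail_count_a[OF i] \<open>n - l + 1 \<le> a i\<close> by (simp add: npos_eq_tail_count)
qed

lemma e_vec_in_Cset:
  assumes l: "l \<in> {1..n}"
  shows "E l \<in> Cset n S"
proof (rule CsetI)
  show "E l \<in> Wc n"
    using e_vec_Rn by (auto simp: Wc_def e_vec_def)
next
  fix i j assume ij: "1 \<le> i" "i \<le> j" "j \<le> n"
  have plus_row: "j \<le> npos l + (n - l)" if "i \<le> k" "j \<le> i + a i - 1" "npos l < i"
    using a_add_le_npos[of i l] a_bounds(1)[of i] that ij by auto
  have minus_row: "i \<le> k \<and> j \<le> i + a i - 1" if "i \<le> npos l" "j \<le> npos l + (n - l)"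
    using npos_le_a_add[of i l] npos_le_k[of l] a_bounds(1)[of i] that ij l by auto
  show "if i \<le> k \<and> j \<le> i + a i - 1 then 0 \<le> E l i + E l j else E l i + E l j \<le> 0"
  proof (cases "i \<le> k \<and> j \<le> i + a i - 1")
    case True
    then show ?thesis
      using plus_row ij by (cases "i \<le> npos l") (auto simp: e_vec_def npos_def[symmetric])
  next
    case False
    then show ?thesis
      using minus_row ij by (auto simp: e_vec_def npos_def[symmetric])
  qed
qed

lemma lincomb_in_Cset:
  assumes c: "\<And>l. l \<in> {1..n} \<Longrightarrow> 0 \<le> c l"
  shows "lincomb c \<in> Cset n S"
proof (rule CsetI)
  show "lincomb c \<in> Wc n"
    unfolding Wc_def
  proof (safe intro!: lincomb_Rn)
    fix i assume i: "1 \<le> i" "i < n"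
    show "lincomb c (Suc i) \<le> lincomb c i"
      unfolding lincomb_def
      by (intro sum_mono mult_left_mono c) (use Cset_antimono[OF e_vec_in_Cset] i in auto)
  qed
next
  fix i j assume ij: "1 \<le> i" "i \<le> j" "j \<le> n"
  have sum: "lincomb c i + lincomb c j = (\<Sum>l=1..n. c l * (E l i + E l j))"
    by (simp add: lincomb_def sum.distrib[symmetric] algebra_simps)
  have E: "if i \<le> k \<and> j \<le> i + a i - 1 then 0 \<le> E l i + E l j else E l i + E l j \<le> 0"
    if "l \<in> {1..n}" for l
    using Cset_tableau[OF e_vec_in_Cset[OF that] ij] .
  show "if i \<le> k \<and> j \<le> i + a i - 1 then 0 \<le> lincomb c i + lincomb c j
    else lincomb c i + lincomb c j \<le> 0"
    unfolding sum using E c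
    by (auto intro!: sum_nonneg sum_nonpos mult_nonneg_nonneg mult_nonneg_nonpos split: if_splits)
qed

lemma Cset_eq_dual_nonneg: "Cset n S = {x \<in> Rn n. \<forall>m\<in>{1..n}. 0 \<le> dual_form m x}"
proof
  show "Cset n S \<subseteq> {x \<in> Rn n. \<forall>m\<in>{1..n}. 0 \<le> dual_form m x}"
    using Cset_subset_Rn dual_form_nonneg by auto
  show "{x \<in> Rn n. \<forall>m\<in>{1..n}. 0 \<le> dual_form m x} \<subseteq> Cset n S"
  proof
    fix x assume "x \<in> {x \<in> Rn n. \<forall>m\<in>{1..n}. 0 \<le> dual_form m x}"
    then show "x \<in> Cset n S"
      using lincomb_in_Cset[of "\<lambda>l. dual_form l x"] lincomb_dual_form by auto
  qed
qed

lemma Cset_eq_nonneg_span: "Cset n S = nonneg_span n E"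
proof
  show "Cset n S \<subseteq> nonneg_span n E"
  proof
    fix x assume x: "x \<in> Cset n S"
    then have "x = lincomb (\<lambda>l. dual_form l x)"
      using lincomb_dual_form Cset_subset_Rn by auto
    then show "x \<in> nonneg_span n E"
      using dual_form_nonneg x unfolding nonneg_span_def lincomb_def
      by (intro CollectI exI[of _ "\<lambda>l. dual_form l x"]) auto
  qed
  show "nonneg_span n E \<subseteq> Cset n S"
    unfolding nonneg_span_def using lincomb_in_Cset unfolding lincomb_def by blast
qed

lemma dual_form_zero: "dual_form m (\<lambda>i. 0) = 0"
  by (simp add: dual_form_def tail_form_def)

lemma lin_indep_e_vec: "lin_indep_fam n E"
  unfolding lin_indep_fam_def
proof (intro allI impI ballI)
  fix c l assume c: "(\<lambda>i. \<Sum>l=1..n. c l * E l i) = (\<lambda>i. 0)" and l: "l \<in> {1..n}"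
  have "c l = dual_form l (lincomb c)"
    using dual_form_lincomb l by simp
  also have "\<dots> = 0"
    using c dual_form_zero by (simp add: lincomb_def)
  finally show "c l = 0" .
qed

section \<open>Faces and extreme rays\<close>

lemma dual_form_sum: "dual_form m (\<lambda>j. \<Sum>i\<in>I. c i * f i j) = (\<Sum>i\<in>I. c i * dual_form m (f i))"
  by (simp add: dual_form_def tail_form_def sum_distrib_left sum_subtractf algebra_simps)

lemma dual_form_scale: "dual_form m (\<lambda>i. t * v i) = t * dual_form m v"
  by (simp add: dual_form_def tail_form_def algebra_simps)

lemma zero_in_Cset: "(\<lambda>i. 0) \<in> Cset n S"
  using Cset_eq_dual_nonneg by (simp add: Rn_def dual_form_zero)

lemma scale_in_Cset: "x \<in> Cset n S \<Longrightarrow> 0 \<le> t \<Longrightarrow> (\<lambda>i. t * x i) \<in> Cset n S"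
  using Cset_eq_dual_nonneg dual_form_scale by (auto simp: Rn_def)

lemma dual_form_e_vec: "m \<in> {1..n} \<Longrightarrow> l \<in> {1..n} \<Longrightarrow> dual_form m (E l) = (if m = l then 1 else 0)"
proof -
  assume m: "m \<in> {1..n}" and l: "l \<in> {1..n}"
  have "lincomb (\<lambda>l'. if l' = l then 1 else 0) = E l"
  proof
    fix i
    have "lincomb (\<lambda>l'. if l' = l then 1 else 0) i = (\<Sum>l'=1..n. if l' = l then E l i else 0)"
      unfolding lincomb_def by (intro sum.cong) auto
    then show "lincomb (\<lambda>l'. if l' = l then 1 else 0) i = E l i"
      using l by simp
  qed
  then show ?thesis
    using dual_form_lincomb[OF m, of "\<lambda>l'. if l' = l then 1 else 0"] by simp
qed

lemma e_vec_nonzero: "l \<in> {1..n} \<Longrightarrow> E l \<noteq> (\<lambda>i. 0)"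
  using dual_form_e_vec[of l l] dual_form_zero by auto

lemma lin_form_lincomb: "lin_form n w (lincomb c) = (\<Sum>l=1..n. c l * lin_form n w (E l))"
proof -
  have "lin_form n w (lincomb c) = (\<Sum>i=1..n. \<Sum>l=1..n. c l * (w i * E l i))"
    by (simp add: lin_form_def lincomb_def sum_distrib_left algebra_simps)
  also have "\<dots> = (\<Sum>l=1..n. c l * lin_form n w (E l))"
    by (subst sum.swap) (simp add: lin_form_def sum_distrib_left)
  finally show ?thesis .
qed

lemma lin_form_Cset:
  "x \<in> Cset n S \<Longrightarrow> lin_form n w x = (\<Sum>l=1..n. dual_form l x * lin_form n w (E l))"
  using lin_form_lincomb[of w "\<lambda>l. dual_form l x"] lincomb_dual_form[of x] Cset_subset_Rn by auto

definition span_face where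
  "span_face L = {x \<in> Cset n S. \<forall>m \<in> {1..n} - L. dual_form m x = 0}"

lemma span_face_singleton:
  assumes l: "l \<in> {1..n}"
  shows "span_face {l} = ray_from (\<lambda>i. 0) (E l)"
proof (intro equalityI subsetI)
  fix x assume x: "x \<in> span_face {l}"
  then have "x = lincomb (\<lambda>m. dual_form m x)"
    using lincomb_dual_form Cset_subset_Rn by (auto simp: span_face_def)
  also have "\<dots> = (\<lambda>i. 0 + dual_form l x * E l i)"
  proof
    fix i
    have "lincomb (\<lambda>m. dual_form m x) i = (\<Sum>m=1..n. if m = l then dual_form l x * E l i else 0)"
      using x unfolding lincomb_def span_face_def by (intro sum.cong) auto
    then show "lincomb (\<lambda>m. dual_form m x) i = 0 + dual_form l x * E l i"
      using l by simp
  qed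
  finally show "x \<in> ray_from (\<lambda>i. 0) (E l)"
    using dual_form_nonneg x l unfolding ray_from_def span_face_def by blast
next
  fix y assume "y \<in> ray_from (\<lambda>i. 0) (E l)"
  then obtain t where "0 \<le> t" "y = (\<lambda>i. t * E l i)"
    unfolding ray_from_def by auto
  then show "y \<in> span_face {l}"
    using scale_in_Cset[OF e_vec_in_Cset[OF l]] dual_form_scale dual_form_e_vec l
    by (auto simp: span_face_def)
qed

lemma span_face_halfline:
  assumes L: "L \<subseteq> {1..n}" and halfline: "is_halfline n (span_face L)"
  obtains l where "l \<in> {1..n}" "span_face L = ray_from (\<lambda>i. 0) (E l)"
proof -
  have "(\<lambda>i. 0) \<in> span_face L"
    using zero_in_Cset dual_form_zero by (simp add: span_face_def)
  then obtain v where multiple: "\<And>y. y \<in> span_face L \<Longrightarrow> \<exists>s. y = (\<lambda>i. s * v i)"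
    using halfline_through_0_multiples[OF halfline] by blast
  have E_in: "E l \<in> span_face L" if "l \<in> L" for l
    using that L e_vec_in_Cset dual_form_e_vec by (auto simp: span_face_def)
  have "L \<noteq> {}"
  proof
    assume "L = {}"
    then have "y = (\<lambda>i. 0)" if "y \<in> span_face L" for y
      using that lincomb_dual_form[of y] Cset_subset_Rn by (auto simp: span_face_def lincomb_def)
    then show False
      using halfline_two_points[OF halfline] by metis
  qed
  then obtain l where l: "l \<in> L"
    by blast
  have "L = {l}"
  proof (rule ccontr)
    assume "L \<noteq> {l}"
    then obtain l' where l': "l' \<in> L" "l' \<noteq> l"
      using l by blast
    obtain s s' where s: "E l = (\<lambda>i. s * v i)" and s': "E l' = (\<lambda>i. s' * v i)"
      using multiple E_in l l' by meson
    have "l \<in> {1..n}" "l' \<in> {1..n}"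
      using L l l' by auto
    then have "1 = s * dual_form l v" "0 = s' * dual_form l v"
      using dual_form_e_vec[of l l] dual_form_e_vec[of l l'] l'(2)
      by (simp_all add: s s' dual_form_scale)
    then have "s' = 0"
      by (metis mult_cancel_left1 mult_eq_0_iff)
    then have "E l' = (\<lambda>i. 0)"
      using s' by simp
    then show False
      using e_vec_nonzero L l' by auto
  qed
  then show ?thesis
    using that span_face_singleton L l by auto
qed

lemma lin_form_scale: "lin_form n w (\<lambda>i. t * x i) = t * lin_form n w x"
  by (simp add: lin_form_def sum_distrib_left algebra_simps)

lemma supporting_hyperplane_Cset:
  assumes "supporting_hyperplane n (Cset n S) H"
  obtains w where "H = {x \<in> Rn n. lin_form n w x = 0}" and "\<And>x. x \<in> Cset n S \<Longrightarrow> lin_form n w x \<le> 0"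
proof -
  obtain w b where H: "H = {x \<in> Rn n. lin_form n w x = b}"
    and le: "\<And>x. x \<in> Cset n S \<Longrightarrow> lin_form n w x \<le> b" and "Cset n S \<inter> H \<noteq> {}"
    using assms unfolding supporting_hyperplane_def by blast
  then obtain y where y: "y \<in> Cset n S" "lin_form n w y = b"
    by auto
  text \<open>A cone is supported only by hyperplanes through its apex.\<close>
  have "0 \<le> b"
    using le[OF zero_in_Cset] by (simp add: lin_form_def)
  moreover have "2 * b \<le> b"
    using le[OF scale_in_Cset[OF y(1), of 2]] y(2) lin_form_scale[of w 2 y] by simp
  ultimately have "b = 0"
    by simp
  then show ?thesis
    using that[of w] H le by blast
qed

lemma face_Cset_eq_span_face:
  assumes "is_face n (Cset n S) F"
  obtains L where "L \<subseteq> {1..n}" "F = span_face L"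
proof (cases "F = Cset n S")
  case True
  moreover have "span_face {1..n} = Cset n S"
    by (simp add: span_face_def)
  ultimately show ?thesis
    using that[of "{1..n}"] by simp
next
  case False
  then obtain H where H: "supporting_hyperplane n (Cset n S) H" and F_H: "F = Cset n S \<inter> H"
    using assms by (auto simp: is_face_def)
  obtain w where "H = {x \<in> Rn n. lin_form n w x = 0}"
    and le: "\<And>x. x \<in> Cset n S \<Longrightarrow> lin_form n w x \<le> 0"
    using supporting_hyperplane_Cset[OF H] by blast
  then have F: "F = Cset n S \<inter> {x \<in> Rn n. lin_form n w x = 0}"
    using F_H by simp
  define L where "L = {l \<in> {1..n}. lin_form n w (E l) = 0}"
  have E_le: "lin_form n w (E l) \<le> 0" if "l \<in> {1..n}" for l
    using le e_vec_in_Cset[OF that] by blast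
  text \<open>On the cone, \<open>lin_form n w\<close> is a sum of non-positive terms, one per generator.\<close>
  have zero_iff: "lin_form n w x = 0 \<longleftrightarrow> (\<forall>m\<in>{1..n} - L. dual_form m x = 0)"
    if x: "x \<in> Cset n S" for x
  proof -
    have "lin_form n w x = 0 \<longleftrightarrow> (\<Sum>l=1..n. - (dual_form l x * lin_form n w (E l))) = 0"
      using lin_form_Cset[OF x] by (simp add: sum_negf)
    also have "\<dots> \<longleftrightarrow> (\<forall>l\<in>{1..n}. - (dual_form l x * lin_form n w (E l)) = 0)"
      using dual_form_nonneg[OF x] E_le
      by (intro sum_nonneg_eq_0_iff) (auto simp: mult_nonneg_nonpos)
    also have "\<dots> \<longleftrightarrow> (\<forall>m\<in>{1..n} - L. dual_form m x = 0)"
      unfolding L_def by auto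
    finally show ?thesis .
  qed
  have "F = span_face L"
  proof (intro set_eqI)
    fix x
    show "x \<in> F \<longleftrightarrow> x \<in> span_face L"
      using F zero_iff[of x] Cset_subset_Rn unfolding span_face_def by blast
  qed
  moreover have "L \<subseteq> {1..n}"
    by (auto simp: L_def)
  ultimately show ?thesis
    using that by blast
qed

lemma lin_form_sum_dual_form:
  obtains w where "w \<in> Rn n" and "\<And>x. x \<in> Rn n \<Longrightarrow> lin_form n w x = (\<Sum>m\<in>M. dual_form m x)"
proof -
  have "(\<Sum>m\<in>M. dual_form m (\<lambda>j. \<Sum>i=1..n. c i * f i j)) =
      (\<Sum>i=1..n. c i * (\<Sum>m\<in>M. dual_form m (f i)))" for c f
    unfolding dual_form_sum by (subst sum.swap) (simp add: sum_distrib_left)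
  then show ?thesis
    using lin_form_representation[where G = "\<lambda>x. \<Sum>m\<in>M. dual_form m x" and n = n] that by blast
qed

lemma sum_dual_form_Cset:
  assumes x: "x \<in> Cset n S" and M: "M \<subseteq> {1..n}"
  shows "0 \<le> (\<Sum>m\<in>M. dual_form m x)"
    and "(\<Sum>m\<in>M. dual_form m x) = 0 \<longleftrightarrow> (\<forall>m\<in>M. dual_form m x = 0)"
proof -
  have nonneg: "0 \<le> dual_form m x" if "m \<in> M" for m
    using dual_form_nonneg[OF x] that M by blast
  then show "0 \<le> (\<Sum>m\<in>M. dual_form m x)"
    by (rule sum_nonneg)
  show "(\<Sum>m\<in>M. dual_form m x) = 0 \<longleftrightarrow> (\<forall>m\<in>M. dual_form m x = 0)"
    using nonneg M finite_subset by (intro sum_nonneg_eq_0_iff) auto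
qed

lemma sum_dual_form_e_vec:
  "l \<in> {1..n} \<Longrightarrow> M \<subseteq> {1..n} \<Longrightarrow> (\<Sum>m\<in>M. dual_form m (E l)) = (if l \<in> M then 1 else 0)"
  using dual_form_e_vec finite_subset[of M "{1..n}"]
  by (simp add: subset_iff sum.delta[of M l "\<lambda>_. 1"] cong: sum.cong)

lemma lin_form_uminus: "lin_form n (\<lambda>i. - w i) x = - lin_form n w x"
  by (simp add: lin_form_def sum_negf)

lemma span_face_singleton_is_face:
  assumes l: "l \<in> {1..n}"
  shows "is_face n (Cset n S) (span_face {l})"
proof (cases "{1..n} - {l} = {}")
  case True
  have "span_face {l} = Cset n S"
    unfolding span_face_def True by simp
  then show ?thesis
    by (simp add: is_face_def)
next
  case False
  then obtain m0 where m0: "m0 \<in> {1..n} - {l}"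
    by blast
  obtain w where w: "w \<in> Rn n"
    and w_eq: "\<And>x. x \<in> Rn n \<Longrightarrow> lin_form n w x = (\<Sum>m\<in>{1..n} - {l}. dual_form m x)"
    using lin_form_sum_dual_form[where M = "{1..n} - {l}"] by blast
  have "lin_form n w (E m0) = 1"
    using m0 w_eq[OF e_vec_Rn] sum_dual_form_e_vec[of m0] by simp
  then have nonzero: "(\<lambda>i. - w i) \<noteq> (\<lambda>i. 0)"
  proof (rule contrapos_pn)
    assume "(\<lambda>i. - w i) = (\<lambda>i. 0)"
    then have "w = (\<lambda>i. 0)"
      by (simp add: fun_eq_iff)
    then show "lin_form n w (E m0) \<noteq> 1"
      by (simp add: lin_form_def)
  qed
  define H where "H = {x \<in> Rn n. lin_form n (\<lambda>i. - w i) x = 0}"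
  have "supporting_hyperplane n (Cset n S) H"
    unfolding supporting_hyperplane_def
  proof (intro exI conjI)
    show "\<forall>x\<in>Cset n S. lin_form n (\<lambda>i. - w i) x \<le> 0"
      using w_eq Cset_subset_Rn sum_dual_form_Cset(1) by (auto simp: lin_form_uminus)
    show "Cset n S \<inter> H \<noteq> {}"
      using zero_in_Cset by (auto simp: H_def lin_form_def Rn_def)
  qed (use w nonzero H_def in \<open>auto simp: Rn_def\<close>)
  moreover have "Cset n S \<inter> H = span_face {l}"
  proof (intro set_eqI)
    fix x
    show "x \<in> Cset n S \<inter> H \<longleftrightarrow> x \<in> span_face {l}"
    proof (cases "x \<in> Cset n S")
      case True
      then have "x \<in> H \<longleftrightarrow> (\<forall>m\<in>{1..n} - {l}. dual_form m x = 0)"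
        using w_eq[of x] sum_dual_form_Cset(2)[OF True, of "{1..n} - {l}"] Cset_subset_Rn
        by (auto simp: H_def lin_form_uminus)
      then show ?thesis
        using True by (simp add: span_face_def)
    qed (simp add: span_face_def)
  qed
  ultimately show ?thesis
    unfolding is_face_def by blast
qed

lemma extreme_rays_Cset: "extreme_rays n (Cset n S) = {ray_from (\<lambda>i. 0) (E l) | l. l \<in> {1..n}}"
proof (intro equalityI subsetI)
  fix F assume "F \<in> extreme_rays n (Cset n S)"
  then have face: "is_face n (Cset n S) F" and halfline: "is_halfline n F"
    by (auto simp: extreme_rays_def)
  obtain L where "L \<subseteq> {1..n}" "F = span_face L"
    using face_Cset_eq_span_face[OF face] by blast
  then obtain l where "l \<in> {1..n}" "F = ray_from (\<lambda>i. 0) (E l)"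
    using span_face_halfline halfline by blast
  then show "F \<in> {ray_from (\<lambda>i. 0) (E l) | l. l \<in> {1..n}}"
    by blast
next
  fix F assume "F \<in> {ray_from (\<lambda>i. 0) (E l) | l. l \<in> {1..n}}"
  then obtain l where l: "l \<in> {1..n}" "F = ray_from (\<lambda>i. 0) (E l)"
    by blast
  have "is_halfline n F"
    unfolding is_halfline_def using l e_vec_Rn e_vec_nonzero
    by (intro exI[of _ "\<lambda>i. 0"] exI[of _ "E l"]) (auto simp: Rn_def)
  moreover have "is_face n (Cset n S) F"
    using span_face_singleton_is_face[OF l(1)] span_face_singleton[OF l(1)] l(2) by simp
  ultimately show "F \<in> extreme_rays n (Cset n S)"
    by (simp add: extreme_rays_def)
qed

section \<open>Open chambers\<close>

definition open_cone where "open_cone = {x \<in> Rn n. \<forall>m\<in>{1..n}. 0 < dual_form m x}"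

lemma open_cone_subset_Cset: "open_cone \<subseteq> Cset n S"
  using Cset_eq_dual_nonneg by (auto simp: open_cone_def less_imp_le)

lemma tail_form_strict_antimono:
  assumes x: "x \<in> open_cone" and "m \<in> {1..n}" "m < m'" "m' \<le> n + 1"
  shows "tail_form m' x < tail_form m x"
proof -
  have "{m..n} = {m..<m'} \<union> {m'..n}"
    using assms by auto
  then have "(\<Sum>l=m..n. dual_form l x) = (\<Sum>l=m..<m'. dual_form l x) + (\<Sum>l=m'..n. dual_form l x)"
    by (simp add: sum.union_disjoint ivl_disj_int)
  then have "tail_form m x = (\<Sum>l=m..<m'. dual_form l x) + tail_form m' x"
    using tail_form_eq_sum[of m x] tail_form_eq_sum[of m' x] assms by simp
  moreover have "0 < (\<Sum>l=m..<m'. dual_form l x)"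
    using assms by (intro sum_pos) (auto simp: open_cone_def)
  ultimately show ?thesis
    by simp
qed

lemma abs_pivot:
  assumes "x \<in> open_cone" "m \<in> {1..n}"
  shows "\<bar>x (pivot m)\<bar> = tail_form m x" and "0 < tail_form m x"
proof -
  show pos: "0 < tail_form m x"
    using tail_form_strict_antimono[OF assms, of "n + 1"] assms by (simp add: tail_form_def)
  show "\<bar>x (pivot m)\<bar> = tail_form m x"
    using pivot_eq_tail_form[OF assms(2), of x] pos by (simp add: sign_def abs_mult)
qed

lemma abs_pivot_eq_imp_eq:
  assumes x: "x \<in> open_cone" and m: "m \<in> {1..n}" "m' \<in> {1..n}"
    and eq: "\<bar>x (pivot m)\<bar> = \<bar>x (pivot m')\<bar>"
  shows "m = m'"
proof -
  have "tail_form m x = tail_form m' x"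
    using eq abs_pivot(1)[OF x m(1)] abs_pivot(1)[OF x m(2)] by simp
  moreover have "m' \<le> n + 1" "m \<le> n + 1"
    using m by auto
  ultimately show ?thesis
    using tail_form_strict_antimono[OF x m(1), of m'] tail_form_strict_antimono[OF x m(2), of m]
    by (cases m m' rule: linorder_cases) auto
qed

lemma open_cone_subset_generic: "open_cone \<subseteq> W0 n - arr_union n"
proof
  fix x assume x: "x \<in> open_cone"
  have pivot_of: "\<exists>m\<in>{1..n}. i = pivot m" if "i \<in> {1..n}" for i
    using that pivot_image by blast
  have "x \<in> Wc n"
    using x open_cone_subset_Cset unfolding Cset_def by blast
  moreover have "x i \<noteq> 0" if i: "i \<in> {1..n}" for i
    using pivot_of[OF i] abs_pivot[OF x] by force
  moreover have "\<bar>x i\<bar> \<noteq> \<bar>x j\<bar>" if ij: "i \<in> {1..n}" "j \<in> {1..n}" "i < j" for i j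
    using pivot_of[OF ij(1)] pivot_of[OF ij(2)] abs_pivot_eq_imp_eq[OF x] ij(3) by blast
  ultimately show "x \<in> W0 n - arr_union n"
    unfolding generic_point_iff by blast
qed

lemma dual_form_pos_generic:
  assumes x: "x \<in> Cset n S" "x \<in> W0 n - arr_union n" and m: "m \<in> {1..n}"
  shows "0 < dual_form m x"
proof -
  have generic: "\<And>i. i \<in> {1..n} \<Longrightarrow> x i \<noteq> 0"
    "\<And>i j. i \<in> {1..n} \<Longrightarrow> j \<in> {1..n} \<Longrightarrow> i < j \<Longrightarrow> \<bar>x i\<bar> \<noteq> \<bar>x j\<bar>"
    using x(2) generic_point_iff by blast+
  have "dual_form m x \<noteq> 0"
  proof (cases "m = n")
    case True
    then show ?thesis
      using generic(1) pivot_range m by (auto simp: dual_form_def tail_form_def sign_def)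
  next
    case False
    then have "Suc m \<in> {1..n}"
      using m by auto
    then have "pivot m \<noteq> pivot (Suc m)" "pivot m \<in> {1..n}" "pivot (Suc m) \<in> {1..n}"
      using inj_on_pivot m pivot_range by (auto dest: inj_onD)
    then have "\<bar>x (pivot m)\<bar> \<noteq> \<bar>x (pivot (Suc m))\<bar>"
      using generic(2)[of "pivot m" "pivot (Suc m)"] generic(2)[of "pivot (Suc m)" "pivot m"]
      by (cases "pivot m < pivot (Suc m)") auto
    then show ?thesis
      using m False by (auto simp: dual_form_def tail_form_def sign_def split: if_splits)
  qed
  then show ?thesis
    using dual_form_nonneg[OF x(1) m] by simp
qed

lemma open_cone_eq: "open_cone = Cset n S \<inter> (W0 n - arr_union n)"
  using open_cone_subset_Cset open_cone_subset_generic dual_form_pos_generic Cset_subset_Rn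
  by (auto simp: open_cone_def)

lemma lincomb_1_in_open_cone: "lincomb (\<lambda>l. 1) \<in> open_cone"
  unfolding open_cone_def using dual_form_lincomb[of _ "\<lambda>l. 1"] lincomb_Rn by simp

lemma continuous_on_tail_form: "continuous_on UNIV (tail_form m)"
proof (cases "1 \<le> m \<and> m \<le> n")
  case True
  then have "tail_form m = (\<lambda>x. sign m * x (pivot m))"
    by (auto simp: tail_form_def)
  then show ?thesis
    by (auto intro!: continuous_intros)
next
  case False
  then have "tail_form m = (\<lambda>x. 0)"
    by (auto simp: tail_form_def)
  then show ?thesis
    by simp
qed

lemma continuous_on_dual_form: "continuous_on UNIV (dual_form m)"
  unfolding dual_form_def[abs_def] by (auto intro!: continuous_intros continuous_on_tail_form)

lemma openin_open_cone: "openin (top_of_set (W0 n - arr_union n)) open_cone"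
proof -
  have "open (\<Inter>m\<in>{1..n}. {x. 0 < dual_form m x})"
    using continuous_on_dual_form
    by (intro open_INT) (auto intro!: open_Collect_less continuous_intros)
  moreover have "open_cone = (W0 n - arr_union n) \<inter> (\<Inter>m\<in>{1..n}. {x. 0 < dual_form m x})"
    using open_cone_eq by (auto simp: open_cone_def W0_def)
  ultimately show ?thesis
    by (auto simp: openin_open)
qed

lemma dual_form_segment:
  "dual_form m (\<lambda>i. (1 - t) * x i + t * y i) = (1 - t) * dual_form m x + t * dual_form m y"
  by (simp add: dual_form_def tail_form_def algebra_simps)

lemma connected_open_cone: "connected open_cone"
proof (rule path_connected_imp_connected, unfold path_connected_def, intro ballI)
  fix x y assume x: "x \<in> open_cone" and y: "y \<in> open_cone"
  define g where "g t = (\<lambda>i. (1 - t) * x i + t * y i)" for t :: real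
  have "path g"
    unfolding path_def g_def by (auto intro!: continuous_intros)
  moreover have "g t \<in> open_cone" if t: "t \<in> {0..1}" for t
  proof -
    have "g t \<in> Rn n"
      using x y by (auto simp: open_cone_def Rn_def g_def)
    moreover have "0 < dual_form m (g t)" if "m \<in> {1..n}" for m
    proof -
      have "0 < dual_form m x" "0 < dual_form m y"
        using x y that by (auto simp: open_cone_def)
      then show ?thesis
        using t unfolding g_def dual_form_segment
        by (cases "t = 0") (auto intro: add_nonneg_pos add_pos_nonneg)
    qed
    ultimately show ?thesis
      by (simp add: open_cone_def)
  qed
  moreover have "pathstart g = x" "pathfinish g = y"
    by (auto simp: pathstart_def pathfinish_def g_def)
  ultimately show "\<exists>g. path g \<and> path_image g \<subseteq> open_cone \<and> pathstart g = x \<and> pathfinish g = y"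
    unfolding path_image_def by blast
qed

lemma closed_Cset: "closed (Cset n S)"
proof -
  have "Cset n S = Rn n \<inter> (\<Inter>m\<in>{1..n}. {x. 0 \<le> dual_form m x})"
    using Cset_eq_dual_nonneg by auto
  moreover have "closed {x. 0 \<le> dual_form m x}" for m
    using closed_Collect_le[of "\<lambda>x. 0" "dual_form m"] continuous_on_dual_form by auto
  ultimately show ?thesis
    using closed_Rn by (auto intro!: closed_Int closed_INT)
qed

text \<open>Every point \<open>x\<close> of the closed cone is the limit of \<open>x + t w\<close>, \<open>t \<rightarrow> 0+\<close>, with \<open>w\<close>
  in the open cone.\<close>
lemma closure_open_cone: "closure open_cone = Cset n S"
proof
  show "closure open_cone \<subseteq> Cset n S"
    using closure_minimal[OF open_cone_subset_Cset closed_Cset] .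
  show "Cset n S \<subseteq> closure open_cone"
  proof
    fix x assume x: "x \<in> Cset n S"
    define w where "w = lincomb (\<lambda>l. 1)"
    define g where "g t = (\<lambda>i. x i + t * w i)" for t :: real
    have "g t \<in> open_cone" if "0 < t" for t
    proof -
      have "g t \<in> Rn n"
        using x Cset_subset_Rn lincomb_Rn by (auto simp: Rn_def g_def w_def)
      moreover have "0 < dual_form m (g t)" if m: "m \<in> {1..n}" for m
      proof -
        have "dual_form m (g t) = dual_form m x + t * dual_form m w"
          by (simp add: g_def dual_form_def tail_form_def algebra_simps)
        then show ?thesis
          using dual_form_lincomb[OF m] dual_form_nonneg[OF x m] \<open>0 < t\<close> by (simp add: w_def)
      qed
      ultimately show ?thesis
        by (simp add: open_cone_def)
    qed
    then have "g ` {0<..1} \<subseteq> closure open_cone"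
      using closure_subset by fastforce
    moreover have "continuous_on (closure {0<..1}) g"
      unfolding g_def by (auto intro!: continuous_intros)
    ultimately have "g ` closure {0<..1} \<subseteq> closure open_cone"
      by (intro image_closure_subset) auto
    moreover have "(0::real) \<in> closure {0<..1}" "g 0 = x"
      by (auto simp: g_def)
    ultimately show "x \<in> closure open_cone"
      by blast
  qed
qed

lemma open_cone_generic: "x \<in> open_cone \<Longrightarrow> generic_point n x"
  using open_cone_eq by (simp add: generic_point_def)

lemma open_cone_positive_iff:
  assumes x: "x \<in> open_cone" and i: "i \<in> {1..n}"
  shows "0 < x i \<longleftrightarrow> i \<le> k"
proof -
  have C: "x \<in> Cset n S"
    using x open_cone_subset_Cset by blast
  show ?thesis
  proof
    assume "0 < x i"
    moreover have "\<not> i \<le> k \<Longrightarrow> x i + x i \<le> 0"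
      using Cset_tableau[OF C, of i i] i by auto
    ultimately show "i \<le> k"
      by fastforce
  next
    assume "i \<le> k"
    then have "i \<le> i + a i - 1"
      using a_bounds(1)[of i] i by simp
    then have "0 \<le> x i + x i"
      using Cset_tableau[OF C, of i i] \<open>i \<le> k\<close> i by simp
    moreover have "x i \<noteq> 0"
      using open_cone_subset_generic x i generic_point_iff by blast
    ultimately show "0 < x i"
      by simp
  qed
qed

lemma open_cone_a_eq_abs_rank:
  assumes x: "x \<in> open_cone" and ik: "i \<in> {1..k}"
  shows "a i = abs_rank n x i"
proof -
  interpret generic_point n x
    using open_cone_generic[OF x] .
  have C: "x \<in> Cset n S"
    using x open_cone_subset_Cset by blast
  have i: "i \<in> {1..n}" "0 < x i"
    using ik k_le open_cone_positive_iff[OF x] by auto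
  have a: "1 \<le> a i" "a i + i \<le> n + 1"
    using a_bounds ik by auto
  have "{j \<in> {i..n}. 0 \<le> x i + x j} = {i..<i + a i}"
  proof (intro set_eqI)
    fix j
    show "j \<in> {j \<in> {i..n}. 0 \<le> x i + x j} \<longleftrightarrow> j \<in> {i..<i + a i}"
    proof (cases "j \<in> {i..n}")
      case True
      then show ?thesis
        using Cset_tableau[OF C, of i j] add_coords_nonzero[OF i True] ik i a by (auto split: if_splits)
    qed (use a in auto)
  qed
  then have "{i..<i + a i} = {i..<i + abs_rank n x i}"
    using sign_row[OF i] by simp
  then show ?thesis
    by (metis card_atLeastLessThan add_diff_cancel_left')
qed

lemma chamber_label_open_cone:
  assumes x: "x \<in> open_cone"
  shows "chamber_label n x = S"
proof -
  have "{i \<in> {1..n}. 0 < x i} = {1..k}"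
    using open_cone_positive_iff[OF x] k_le by auto
  then have "chamber_label n x = abs_rank n x ` {1..k}"
    by (simp add: chamber_label_def)
  also have "\<dots> = a ` {1..k}"
    using open_cone_a_eq_abs_rank[OF x] by simp
  finally show ?thesis
    using a_image by simp
qed

end

section \<open>The chambers of the arrangement\<close>

lemma components_complement_arrangement:
  "components (W0 n - arr_union n) = subset_chamber.open_cone n ` Pow {1..n}"
proof (rule components_eq_partition)
  show "\<Union>(subset_chamber.open_cone n ` Pow {1..n}) = W0 n - arr_union n"
  proof (intro equalityI subsetI)
    fix x assume "x \<in> \<Union>(subset_chamber.open_cone n ` Pow {1..n})"
    then show "x \<in> W0 n - arr_union n"
      using subset_chamber.open_cone_eq[OF subset_chamber.intro] by blast
  next
    fix x assume x: "x \<in> W0 n - arr_union n"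
    then interpret generic_point n x
      by unfold_locales
    interpret subset_chamber n "chamber_label n x"
      using mem_Cset_chamber_label by unfold_locales blast
    have "x \<in> open_cone"
      using open_cone_eq mem_Cset_chamber_label x by blast
    then show "x \<in> \<Union>(subset_chamber.open_cone n ` Pow {1..n})"
      using mem_Cset_chamber_label by blast
  qed
next
  fix U V assume "U \<in> subset_chamber.open_cone n ` Pow {1..n}" "V \<in> subset_chamber.open_cone n ` Pow {1..n}"
    and "U \<inter> V \<noteq> {}"
  then obtain S S' x where "S \<subseteq> {1..n}" "S' \<subseteq> {1..n}" "U = subset_chamber.open_cone n S"
    "V = subset_chamber.open_cone n S'" "x \<in> U" "x \<in> V"
    by blast
  then show "U = V"
    using subset_chamber.chamber_label_open_cone[OF subset_chamber.intro] by metis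
next
  fix U assume "U \<in> subset_chamber.open_cone n ` Pow {1..n}"
  then obtain S where "S \<subseteq> {1..n}" "U = subset_chamber.open_cone n S"
    by blast
  then interpret subset_chamber n S
    by unfold_locales simp
  show "connected U \<and> U \<noteq> {} \<and> openin (top_of_set (W0 n - arr_union n)) U"
    using connected_open_cone lincomb_1_in_open_cone openin_open_cone \<open>U = open_cone\<close> by blast
qed

lemma chambers_eq: "chambers n = Cset n ` Pow {1..n}"
proof -
  have "chambers n = closure ` subset_chamber.open_cone n ` Pow {1..n}"
    by (simp add: chambers_def components_complement_arrangement)
  also have "\<dots> = Cset n ` Pow {1..n}"
    unfolding image_image
    by (intro image_cong refl subset_chamber.closure_open_cone subset_chamber.intro) simp
  finally show ?thesis .
qed

lemma inj_on_Cset: "inj_on (Cset n) (Pow {1..n})"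
proof
  fix S S' assume S: "S \<in> Pow {1..n}" and S': "S' \<in> Pow {1..n}" and eq: "Cset n S = Cset n S'"
  interpret C: subset_chamber n S
    using S by unfold_locales simp
  interpret C': subset_chamber n S'
    using S' by unfold_locales simp
  have "C.lincomb (\<lambda>l. 1) \<in> C'.open_cone"
    using C.lincomb_1_in_open_cone C.open_cone_eq C'.open_cone_eq eq by blast
  then show "S = S'"
    using C.chamber_label_open_cone[OF C.lincomb_1_in_open_cone] C'.chamber_label_open_cone by simp
qed

theorem theorem1p16:
  fixes n :: nat
  shows "(bij_betw (Cset n) (Pow {1..n}) (chambers n) \<and> card (chambers n) = 2 ^ n)
    \<and> (\<forall>S. S \<subseteq> {1..n} \<longrightarrow>
           extreme_rays n (Cset n S) = {ray_from (\<lambda>i. 0) (e_vec n S l) | l. l \<in> {1..n}}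
         \<and> Cset n S = nonneg_span n (e_vec n S)
         \<and> lin_indep_fam n (e_vec n S))"
proof (intro conjI allI impI)
  show bij: "bij_betw (Cset n) (Pow {1..n}) (chambers n)"
    using inj_on_Cset chambers_eq by (simp add: bij_betw_def)
  show "card (chambers n) = 2 ^ n"
    using bij_betw_same_card[OF bij] by (simp add: card_Pow)
  fix S assume "S \<subseteq> {1..n}"
  then interpret subset_chamber n S
    by unfold_locales
  show "extreme_rays n (Cset n S) = {ray_from (\<lambda>i. 0) (e_vec n S l) | l. l \<in> {1..n}}"
    by (fact extreme_rays_Cset)
  show "Cset n S = nonneg_span n (e_vec n S)"
    by (fact Cset_eq_nonneg_span)
  show "lin_indep_fam n (e_vec n S)"
    by (fact lin_indep_e_vec)
qed

end
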